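(* Let $X$ be a finite connected poset, $F$ a field and $\varphi$ a Jordan automorphism of $I(X,F)$. Then there exist an invertible $\beta\in I(X,F)$ and a bijection $\lambda:X\to X$ such that $\varphi(e_x)=\beta e_{\lambda(x)}\beta^{-1}$ for all $x\in X$.
   Context: $I(X,F)$ is the incidence algebra of the locally finite poset $X$ over $F$ (functions $f:X\times X\to F$ vanishing unless $x\le y$, with product $(fg)(x,y)=\sum_{x\le z\le y}f(x,z)g(z,y)$). For $x\le y$, $e_{xy}$ is the function equal to $1$ at $(x,y)$ and $0$ elsewhere, and $e_x:=e_{xx}$. A poset is connected if any two elements are joined by a finite sequence of elements in which consecutive elements are comparable. A Jordan automorphism of an associative algebra $A$ is a bijective linear map $\varphi:A\to A$ with $\varphi(a^2)=\varphi(a)^2$ and $\varphi(aba)=\varphi(a)\varphi(b)\varphi(a)$ for all $a,b\in A$. *)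

theory Defs
  imports Main
begin

text \<open>The poset X is the (finite) type 'a with its order; F is the field 'b.
  Elements of I(X,F) are functions f :: 'a => 'a => 'b vanishing unless x <= y.\<close>

definition incidence_algebra :: "('a::order \<Rightarrow> 'a \<Rightarrow> 'b::field) set" where
  "incidence_algebra = {f. \<forall>x y. \<not> x \<le> y \<longrightarrow> f x y = 0}"

definition inc_mult :: "('a::{order,finite} \<Rightarrow> 'a \<Rightarrow> 'b::field) \<Rightarrow> ('a \<Rightarrow> 'a \<Rightarrow> 'b) \<Rightarrow> ('a \<Rightarrow> 'a \<Rightarrow> 'b)" where
  "inc_mult f g = (\<lambda>x y. \<Sum>z\<in>{z. x \<le> z \<and> z \<le> y}. f x z * g z y)"

definition inc_add :: "('a \<Rightarrow> 'a \<Rightarrow> 'b::field) \<Rightarrow> ('a \<Rightarrow> 'a \<Rightarrow> 'b) \<Rightarrow> ('a \<Rightarrow> 'a \<Rightarrow> 'b)" where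
  "inc_add f g = (\<lambda>x y. f x y + g x y)"

definition inc_smult :: "'b::field \<Rightarrow> ('a \<Rightarrow> 'a \<Rightarrow> 'b) \<Rightarrow> ('a \<Rightarrow> 'a \<Rightarrow> 'b)" where
  "inc_smult c f = (\<lambda>x y. c * f x y)"

definition inc_one :: "'a \<Rightarrow> 'a \<Rightarrow> 'b::field" where
  "inc_one = (\<lambda>x y. if x = y then 1 else 0)"

text \<open>e_{xy}, and e_x = e_{xx}.\<close>
definition inc_e :: "'a \<Rightarrow> 'a \<Rightarrow> ('a \<Rightarrow> 'a \<Rightarrow> 'b::field)" where
  "inc_e u v = (\<lambda>x y. if x = u \<and> y = v then 1 else 0)"

definition inc_invertible :: "('a::{order,finite} \<Rightarrow> 'a \<Rightarrow> 'b::field) \<Rightarrow> bool" where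
  "inc_invertible b \<longleftrightarrow> b \<in> incidence_algebra \<and>
     (\<exists>c \<in> incidence_algebra. inc_mult b c = inc_one \<and> inc_mult c b = inc_one)"

definition inc_inverse :: "('a::{order,finite} \<Rightarrow> 'a \<Rightarrow> 'b::field) \<Rightarrow> ('a \<Rightarrow> 'a \<Rightarrow> 'b)" where
  "inc_inverse b = (SOME c. c \<in> incidence_algebra \<and> inc_mult b c = inc_one \<and> inc_mult c b = inc_one)"

definition connected_poset :: "'a::order itself \<Rightarrow> bool" where
  "connected_poset _ \<longleftrightarrow> (\<forall>x y::'a. (\<lambda>a b. a \<le> b \<or> b \<le> a)\<^sup>*\<^sup>* x y)"

definition jordan_automorphism ::
  "(('a::{order,finite} \<Rightarrow> 'a \<Rightarrow> 'b::field) \<Rightarrow> ('a \<Rightarrow> 'a \<Rightarrow> 'b)) \<Rightarrow> bool" where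
  "jordan_automorphism \<phi> \<longleftrightarrow>
     bij_betw \<phi> incidence_algebra incidence_algebra \<and>
     (\<forall>a\<in>incidence_algebra. \<forall>b\<in>incidence_algebra. \<forall>c.
        \<phi> (inc_add (inc_smult c a) b) = inc_add (inc_smult c (\<phi> a)) (\<phi> b)) \<and>
     (\<forall>a\<in>incidence_algebra. \<phi> (inc_mult a a) = inc_mult (\<phi> a) (\<phi> a)) \<and>
     (\<forall>a\<in>incidence_algebra. \<forall>b\<in>incidence_algebra.
        \<phi> (inc_mult (inc_mult a b) a) = inc_mult (inc_mult (\<phi> a) (\<phi> b)) (\<phi> a))"

end

theory Submission
  imports Defs "HOL-Library.Function_Algebras"
begin

text \<open>A Jordan automorphism \<open>\<phi>\<close> preserves idempotents and, by polarisation, orthogonality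
  of idempotents, so the \<open>\<phi> e\<^sub>x\<close> are \<open>|X|\<close> nonzero pairwise orthogonal idempotents.
  The diagonal of an idempotent of \<open>I(X,F)\<close> is \<open>0/1\<close>-valued, and an idempotent whose
  diagonal is constant is \<open>0\<close> or \<open>1\<close>. Hence each \<open>\<phi> e\<^sub>x\<close> has a diagonal entry \<open>1\<close> at
  some \<open>\<lambda> x\<close>; orthogonality makes \<open>\<lambda>\<close> injective, hence bijective, and then
  \<open>\<beta> = \<Sum>\<^sub>x \<phi> e\<^sub>x e\<^sub>\<lambda>\<^sub>x\<close> is invertible and conjugates \<open>e\<^sub>\<lambda>\<^sub>x\<close> to \<open>\<phi> e\<^sub>x\<close>.\<close>

lemma inc_add_eq_plus: "inc_add f g = f + g"
  by (auto simp: inc_add_def fun_eq_iff)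

lemma sum_apply2: "(\<Sum>i\<in>A. (f i :: 'a \<Rightarrow> 'c \<Rightarrow> 'b::comm_monoid_add)) x y = (\<Sum>i\<in>A. f i x y)"
  by (induction A rule: infinite_finite_induct) auto

lemma sum_interval_delta:
  fixes x y w :: "'a::{order,finite}"
  shows "(\<Sum>z\<in>{z. x \<le> z \<and> z \<le> y}. if z = w then g z else 0) =
           (if x \<le> w \<and> w \<le> y then g w else (0::'b::comm_monoid_add))"
  by (subst sum.delta) auto

lemma inc_mult_assoc:
  "inc_mult (inc_mult f g) h = inc_mult f (inc_mult g (h::'a::{order,finite} \<Rightarrow> 'a \<Rightarrow> 'b::field))"
proof (rule ext, rule ext)
  fix x y :: 'a
  have "inc_mult (inc_mult f g) h x y =
      (\<Sum>z\<in>{z. x \<le> z \<and> z \<le> y}. \<Sum>w\<in>{w. x \<le> w \<and> w \<le> z}. f x w * g w z * h z y)"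
    by (simp add: inc_mult_def sum_distrib_right)
  also have "\<dots> = (\<Sum>(z,w)\<in>{(z,w). x \<le> w \<and> w \<le> z \<and> z \<le> y}. f x w * g w z * h z y)"
    by (subst sum.Sigma) (auto intro!: sum.cong dest: order_trans)
  also have "\<dots> = (\<Sum>(w,z)\<in>{(w,z). x \<le> w \<and> w \<le> z \<and> z \<le> y}. f x w * g w z * h z y)"
    by (rule sum.reindex_bij_witness[where i="\<lambda>(a,b). (b,a)" and j="\<lambda>(a,b). (b,a)"]) auto
  also have "\<dots> = (\<Sum>w\<in>{w. x \<le> w \<and> w \<le> y}. \<Sum>z\<in>{z. w \<le> z \<and> z \<le> y}. f x w * g w z * h z y)"
    by (subst sum.Sigma) (auto intro!: sum.cong dest: order_trans)
  also have "\<dots> = inc_mult f (inc_mult g h) x y"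
    by (simp add: inc_mult_def sum_distrib_left mult.assoc)
  finally show "inc_mult (inc_mult f g) h x y = inc_mult f (inc_mult g h) x y" .
qed

lemma inc_mult_add_left: "inc_mult (f + g) h = inc_mult f h + inc_mult g h"
  by (auto simp: inc_mult_def fun_eq_iff distrib_right sum.distrib)

lemma inc_mult_add_right: "inc_mult h (f + g) = inc_mult h f + inc_mult h g"
  by (auto simp: inc_mult_def fun_eq_iff distrib_left sum.distrib)

lemma inc_mult_sum_left: "inc_mult (\<Sum>i\<in>A. f i) h = (\<Sum>i\<in>A. inc_mult (f i) h)"
  by (auto simp: inc_mult_def fun_eq_iff sum_apply2 sum_distrib_right intro: sum.swap)

lemma inc_mult_sum_right: "inc_mult h (\<Sum>i\<in>A. f i) = (\<Sum>i\<in>A. inc_mult h (f i))"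
  by (auto simp: inc_mult_def fun_eq_iff sum_apply2 sum_distrib_left intro: sum.swap)

lemma inc_mult_zero [simp]: "inc_mult 0 h = 0" "inc_mult h 0 = 0"
  by (auto simp: inc_mult_def fun_eq_iff)

lemma inc_mult_one_left:
  assumes "f \<in> incidence_algebra" shows "inc_mult inc_one f = f"
proof (intro ext)
  fix x y
  have "inc_mult inc_one f x y = (\<Sum>z\<in>{z. x \<le> z \<and> z \<le> y}. if z = x then f z y else 0)"
    unfolding inc_mult_def inc_one_def by (rule sum.cong) auto
  also have "\<dots> = f x y"
    using assms by (simp add: sum_interval_delta incidence_algebra_def)
  finally show "inc_mult inc_one f x y = f x y" .
qed

lemma inc_mult_one_right:
  assumes "f \<in> incidence_algebra" shows "inc_mult f inc_one = f"
proof (intro ext)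
  fix x y
  have "inc_mult f inc_one x y = (\<Sum>z\<in>{z. x \<le> z \<and> z \<le> y}. if z = y then f x z else 0)"
    unfolding inc_mult_def inc_one_def by (rule sum.cong) auto
  also have "\<dots> = f x y"
    using assms by (simp add: sum_interval_delta incidence_algebra_def)
  finally show "inc_mult f inc_one x y = f x y" .
qed

lemma inc_mult_diag: "inc_mult f g x x = f x x * g x x"
proof -
  have "{z. x \<le> z \<and> z \<le> x} = {x}" by (auto intro: antisym)
  then show ?thesis by (simp add: inc_mult_def)
qed

lemma inc_mult_in_incidence_algebra: "inc_mult f g \<in> incidence_algebra"
  unfolding incidence_algebra_def inc_mult_def
  by (auto intro!: sum.neutral dest: order_trans)

lemma sum_in_incidence_algebra:
  "(\<And>i. i \<in> A \<Longrightarrow> f i \<in> incidence_algebra) \<Longrightarrow> (\<Sum>i\<in>A. f i) \<in> incidence_algebra"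
  by (induction A rule: infinite_finite_induct) (auto simp: incidence_algebra_def)

lemma zero_in_incidence_algebra: "0 \<in> incidence_algebra"
  by (auto simp: incidence_algebra_def)

lemma inc_e_in_incidence_algebra: "inc_e x x \<in> incidence_algebra"
  by (auto simp: incidence_algebra_def inc_e_def)

lemma inc_e_neq_zero: "inc_e x x \<noteq> (0 :: 'a \<Rightarrow> 'a \<Rightarrow> 'b::field)"
proof
  assume "inc_e x x = (0 :: 'a \<Rightarrow> 'a \<Rightarrow> 'b)"
  then have "inc_e x x x x = (0 :: 'b)" by simp
  then show False by (simp add: inc_e_def)
qed

lemma inc_mult_inc_e_left:
  "inc_mult (inc_e u u) f = (\<lambda>x y. if x = u \<and> u \<le> y then f u y else 0)"
proof (intro ext)
  fix x y
  have "inc_mult (inc_e u u) f x y =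
      (\<Sum>z\<in>{z. x \<le> z \<and> z \<le> y}. if z = u then (if x = u then f z y else 0) else 0)"
    unfolding inc_mult_def inc_e_def by (rule sum.cong) auto
  then show "inc_mult (inc_e u u) f x y = (if x = u \<and> u \<le> y then f u y else 0)"
    by (simp add: sum_interval_delta)
qed

lemma inc_mult_inc_e_right:
  "inc_mult f (inc_e v v) = (\<lambda>x y. if y = v \<and> x \<le> v then f x v else 0)"
proof (intro ext)
  fix x y
  have "inc_mult f (inc_e v v) x y =
      (\<Sum>z\<in>{z. x \<le> z \<and> z \<le> y}. if z = v then (if y = v then f x z else 0) else 0)"
    unfolding inc_mult_def inc_e_def by (rule sum.cong) auto
  then show "inc_mult f (inc_e v v) x y = (if y = v \<and> x \<le> v then f x v else 0)"
    by (simp add: sum_interval_delta)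
qed

lemma inc_mult_inc_e_inc_e: "inc_mult (inc_e u u) (inc_e v v) = (if u = v then inc_e u u else 0)"
  unfolding inc_mult_inc_e_left by (auto simp: inc_e_def fun_eq_iff)

lemma inc_e_sandwich: "inc_mult (inc_mult (inc_e u u) f) (inc_e u u) = inc_smult (f u u) (inc_e u u)"
  unfolding inc_mult_inc_e_left inc_mult_inc_e_right
  by (auto simp: inc_smult_def inc_e_def fun_eq_iff)

lemma sum_inc_e_eq_inc_one: "(\<Sum>x\<in>UNIV. inc_e x x) = (inc_one :: 'a::finite \<Rightarrow> 'a \<Rightarrow> 'b::field)"
  by (auto simp: fun_eq_iff sum_apply2 inc_e_def inc_one_def intro!: sum.neutral)

lemma idempotent_diag_zero_or_one:
  assumes "inc_mult a a = a"
  shows "a y y = 0 \<or> a y y = 1"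
proof -
  have "a y y * a y y = a y y" using assms inc_mult_diag[of a a y] by simp
  then have "a y y * (a y y - 1) = 0" by (simp add: algebra_simps)
  then show ?thesis by simp
qed

text \<open>In \<open>a = a\<^sup>2\<close> the entry at \<open>(x, y)\<close> reads
  \<open>a x y = (a x x + a y y) * a x y + (terms through the open interval)\<close>, and the latter
  vanish by induction on the length of the interval.\<close>

lemma idempotent_offdiag_zero:
  fixes a :: "'a::{order,finite} \<Rightarrow> 'a \<Rightarrow> 'b::field"
  assumes idem: "inc_mult a a = a" and diag: "\<And>x y. x < y \<Longrightarrow> a x x + a y y \<noteq> 1"
  shows "x < y \<Longrightarrow> a x y = 0"
proof (induction "card {z. x \<le> z \<and> z \<le> y}" arbitrary: x y rule: less_induct)
  case (less x y)
  have inner_zero: "a x z * a z y = 0" if z: "x < z" "z < y" for z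
  proof -
    have "{w. x \<le> w \<and> w \<le> z} \<subseteq> {w. x \<le> w \<and> w \<le> y}"
      using z by (auto intro: order_trans less_imp_le)
    moreover have "y \<in> {w. x \<le> w \<and> w \<le> y} - {w. x \<le> w \<and> w \<le> z}"
      using z less.prems by auto
    ultimately have "{w. x \<le> w \<and> w \<le> z} \<subset> {w. x \<le> w \<and> w \<le> y}" by blast
    then have "card {w. x \<le> w \<and> w \<le> z} < card {w. x \<le> w \<and> w \<le> y}"
      by (rule psubset_card_mono[rotated]) simp
    then show ?thesis using less.hyps z by auto
  qed
  have interval: "{z. x \<le> z \<and> z \<le> y} = insert x (insert y {z. x < z \<and> z < y})"
    using less.prems by auto
  have "a x y = inc_mult a a x y" using idem by simp
  also have "\<dots> = a x x * a x y + (a x y * a y y + (\<Sum>z\<in>{z. x < z \<and> z < y}. a x z * a z y))"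
    unfolding inc_mult_def interval using less.prems by (simp add: sum.insert_remove)
  also have "\<dots> = (a x x + a y y) * a x y"
    using inner_zero by (simp add: sum.neutral algebra_simps)
  finally have "(1 - (a x x + a y y)) * a x y = 0" by (simp add: algebra_simps)
  then show ?case using diag[OF less.prems] by simp
qed

lemma idempotent_eq_if_diag_eq:
  fixes a :: "'a::{order,finite} \<Rightarrow> 'a \<Rightarrow> 'b::field"
  assumes "a \<in> incidence_algebra" and "inc_mult a a = a"
    and "c \<in> {0, 1}" and "\<And>y. a y y = c"
  shows "a = inc_smult c inc_one"
proof (intro ext)
  fix x y
  have "c + c \<noteq> 1"
  proof
    assume "c + c = 1"
    with assms(3) have "1 + 1 = 1 + (0::'b)" by auto
    then show False using add_left_cancel one_neq_zero by metis
  qed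
  then have "x < y \<Longrightarrow> a x y = 0"
    using idempotent_offdiag_zero[OF assms(2)] assms(4) by metis
  moreover have "\<not> x \<le> y \<Longrightarrow> a x y = 0"
    using assms(1) by (simp add: incidence_algebra_def)
  ultimately show "a x y = inc_smult c inc_one x y"
    using assms(4) by (cases "x = y") (auto simp: inc_smult_def inc_one_def less_le)
qed

lemma inc_mult_right_inverse_if_left_inverse:
  assumes "b \<in> incidence_algebra" and "inc_mult c b = inc_one"
  shows "inc_mult b c = inc_one"
proof -
  let ?a = "inc_mult b c"
  have "inc_mult ?a ?a = inc_mult (inc_mult b (inc_mult c b)) c"
    by (simp add: inc_mult_assoc)
  also have "\<dots> = ?a" by (simp add: assms inc_mult_one_right)
  finally have "inc_mult ?a ?a = ?a" .
  moreover have "?a y y = 1" for y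
    using fun_cong[OF fun_cong[OF assms(2)], of y y]
    by (simp add: inc_mult_diag inc_one_def mult.commute)
  ultimately have "?a = inc_smult 1 inc_one"
    by (intro idempotent_eq_if_diag_eq inc_mult_in_incidence_algebra) auto
  then show ?thesis by (simp add: inc_smult_def)
qed

lemma inc_inverse_eq_left_inverse:
  assumes "b \<in> incidence_algebra" "c \<in> incidence_algebra" and "inc_mult c b = inc_one"
  shows "inc_invertible b" and "inc_inverse b = c"
proof -
  have bc: "inc_mult b c = inc_one"
    using assms(1,3) by (rule inc_mult_right_inverse_if_left_inverse)
  then show "inc_invertible b"
    unfolding inc_invertible_def using assms by blast
  let ?Q = "\<lambda>c. c \<in> incidence_algebra \<and> inc_mult b c = inc_one \<and> inc_mult c b = inc_one"
  have "?Q (inc_inverse b)"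
    unfolding inc_inverse_def by (rule someI[of ?Q c]) (use assms bc in auto)
  then have "inc_inverse b = inc_mult (inc_mult c b) (inc_inverse b)"
    using assms(3) inc_mult_one_left by metis
  also have "\<dots> = c"
    using \<open>?Q (inc_inverse b)\<close> by (simp add: inc_mult_assoc inc_mult_one_right assms(2))
  finally show "inc_inverse b = c" .
qed

lemma jordan_automorphism_in_incidence_algebra:
  "jordan_automorphism \<phi> \<Longrightarrow> a \<in> incidence_algebra \<Longrightarrow> \<phi> a \<in> incidence_algebra"
  unfolding jordan_automorphism_def bij_betw_def by blast

lemma jordan_automorphism_inj_on:
  "jordan_automorphism \<phi> \<Longrightarrow> inj_on \<phi> incidence_algebra"
  unfolding jordan_automorphism_def bij_betw_def by blast

lemma jordan_automorphism_square:
  "jordan_automorphism \<phi> \<Longrightarrow> a \<in> incidence_algebra \<Longrightarrow>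
     \<phi> (inc_mult a a) = inc_mult (\<phi> a) (\<phi> a)"
  unfolding jordan_automorphism_def by blast

lemma jordan_automorphism_triple:
  "jordan_automorphism \<phi> \<Longrightarrow> a \<in> incidence_algebra \<Longrightarrow> b \<in> incidence_algebra \<Longrightarrow>
     \<phi> (inc_mult (inc_mult a b) a) = inc_mult (inc_mult (\<phi> a) (\<phi> b)) (\<phi> a)"
  unfolding jordan_automorphism_def by blast

lemma jordan_automorphism_add:
  assumes "jordan_automorphism \<phi>" "a \<in> incidence_algebra" "b \<in> incidence_algebra"
  shows "\<phi> (a + b) = \<phi> a + \<phi> b"
proof -
  have "\<phi> (inc_add (inc_smult 1 a) b) = inc_add (inc_smult 1 (\<phi> a)) (\<phi> b)"
    using assms unfolding jordan_automorphism_def by blast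
  then show ?thesis by (simp add: inc_smult_def inc_add_eq_plus)
qed

lemma jordan_automorphism_zero:
  assumes "jordan_automorphism \<phi>"
  shows "\<phi> 0 = 0"
proof -
  have "\<phi> (0 + 0) = \<phi> 0 + \<phi> 0"
    by (rule jordan_automorphism_add[OF assms zero_in_incidence_algebra zero_in_incidence_algebra])
  then show ?thesis by simp
qed

lemma jordan_automorphism_neq_zero:
  assumes "jordan_automorphism \<phi>" "a \<in> incidence_algebra" "a \<noteq> 0"
  shows "\<phi> a \<noteq> 0"
  using assms jordan_automorphism_zero jordan_automorphism_inj_on zero_in_incidence_algebra
  by (metis inj_onD)

text \<open>Polarising the square identity gives \<open>\<phi> u \<phi> v + \<phi> v \<phi> u = 0\<close>; multiplying by
  the idempotent \<open>\<phi> u\<close> on the left and using \<open>\<phi> u \<phi> v \<phi> u = \<phi> (u v u) = 0\<close> leaves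
  \<open>\<phi> u \<phi> v = 0\<close>.\<close>

lemma jordan_automorphism_orthogonal:
  assumes \<phi>: "jordan_automorphism \<phi>"
    and uv: "u \<in> incidence_algebra" "v \<in> incidence_algebra"
    and idem: "inc_mult u u = u"
    and orth: "inc_mult u v = 0" "inc_mult v u = 0"
  shows "inc_mult (\<phi> u) (\<phi> v) = 0"
proof -
  let ?pu = "\<phi> u" and ?pv = "\<phi> v"
  have uvI: "u + v \<in> incidence_algebra"
    using uv by (simp add: incidence_algebra_def)
  have pu_idem: "inc_mult ?pu ?pu = ?pu"
    using jordan_automorphism_square[OF \<phi> uv(1)] idem by simp
  have "inc_mult (?pu + ?pv) (?pu + ?pv) = \<phi> (inc_mult (u + v) (u + v))"
    by (simp add: jordan_automorphism_square[OF \<phi> uvI] jordan_automorphism_add[OF \<phi> uv])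
  also have "\<dots> = \<phi> (inc_mult u u) + \<phi> (inc_mult v v)"
    by (simp add: inc_mult_add_left inc_mult_add_right orth
        jordan_automorphism_add[OF \<phi> inc_mult_in_incidence_algebra inc_mult_in_incidence_algebra])
  also have "\<dots> = inc_mult ?pu ?pu + inc_mult ?pv ?pv"
    by (simp add: jordan_automorphism_square[OF \<phi>] uv)
  finally have anti: "inc_mult ?pu ?pv + inc_mult ?pv ?pu = 0"
    by (simp add: inc_mult_add_left inc_mult_add_right algebra_simps)
  have "inc_mult (inc_mult ?pu ?pv) ?pu = 0"
    using jordan_automorphism_triple[OF \<phi> uv] jordan_automorphism_zero[OF \<phi>] orth by simp
  then have "0 = inc_mult ?pu (inc_mult ?pu ?pv + inc_mult ?pv ?pu)"
    by (simp add: anti)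
  also have "\<dots> = inc_mult ?pu ?pv"
    by (simp add: inc_mult_add_right inc_mult_assoc[symmetric] pu_idem \<open>inc_mult (inc_mult ?pu ?pv) ?pu = 0\<close>)
  finally show ?thesis by simp
qed

lemma orthogonal_idempotents_diag_bij:
  fixes P :: "'a::{order,finite} \<Rightarrow> 'a \<Rightarrow> 'a \<Rightarrow> 'b::field"
  assumes PI: "\<And>x. P x \<in> incidence_algebra"
    and idem: "\<And>x. inc_mult (P x) (P x) = P x"
    and orth: "\<And>x y. x \<noteq> y \<Longrightarrow> inc_mult (P x) (P y) = 0"
    and nz: "\<And>x. P x \<noteq> 0"
  obtains lam where "bij lam" and "\<And>x. P x (lam x) (lam x) = 1"
proof -
  have "\<exists>y. P x y y = 1" for x
  proof (rule ccontr)
    assume "\<nexists>y. P x y y = 1"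
    then have "P x y y = 0" for y
      using idempotent_diag_zero_or_one[OF idem] by blast
    then have "P x = inc_smult 0 inc_one"
      by (intro idempotent_eq_if_diag_eq PI idem) auto
    also have "\<dots> = 0" by (simp add: inc_smult_def fun_eq_iff)
    finally show False using nz by blast
  qed
  then obtain lam where lam: "\<And>x. P x (lam x) (lam x) = 1" by metis
  have "inj lam"
  proof (rule injI)
    fix x x' assume "lam x = lam x'"
    then have "P x (lam x') (lam x') = 1" using lam[of x] by simp
    then have "inc_mult (P x) (P x') (lam x') (lam x') = 1"
      by (simp add: inc_mult_diag lam)
    then show "x = x'" using orth[of x x'] by (cases "x = x'") simp_all
  qed
  then have "bij lam" by (simp add: bij_def finite_UNIV_inj_surj)
  then show thesis using lam by (rule that)
qed

text \<open>With \<open>\<beta> = \<Sum>\<^sub>x P x e\<^sub>\<lambda>\<^sub>x\<close> and \<open>\<gamma> = \<Sum>\<^sub>x e\<^sub>\<lambda>\<^sub>x P x\<close>, orthogonality gives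
  \<open>P x \<beta> = P x e\<^sub>\<lambda>\<^sub>x = \<beta> e\<^sub>\<lambda>\<^sub>x\<close> and \<open>\<gamma> \<beta> = \<Sum>\<^sub>x e\<^sub>\<lambda>\<^sub>x P x e\<^sub>\<lambda>\<^sub>x = 1\<close>.\<close>

lemma orthogonal_idempotents_conjugate:
  fixes P :: "'a::{order,finite} \<Rightarrow> 'a \<Rightarrow> 'a \<Rightarrow> 'b::field"
  assumes PI: "\<And>x. P x \<in> incidence_algebra"
    and idem: "\<And>x. inc_mult (P x) (P x) = P x"
    and orth: "\<And>x y. x \<noteq> y \<Longrightarrow> inc_mult (P x) (P y) = 0"
    and lam: "bij lam" "\<And>x. P x (lam x) (lam x) = 1"
  obtains \<beta> where "inc_invertible \<beta>"
    and "\<And>x. P x = inc_mult (inc_mult \<beta> (inc_e (lam x) (lam x))) (inc_inverse \<beta>)"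
proof -
  let ?e = "\<lambda>x. inc_e (lam x) (lam x) :: 'a \<Rightarrow> 'a \<Rightarrow> 'b"
  define \<beta> where "\<beta> = (\<Sum>x\<in>UNIV. inc_mult (P x) (?e x))"
  define \<gamma> where "\<gamma> = (\<Sum>x\<in>UNIV. inc_mult (?e x) (P x))"
  have P_\<beta>: "inc_mult (P x) \<beta> = inc_mult (P x) (?e x)" for x
  proof -
    have "inc_mult (P x) \<beta> = (\<Sum>x'\<in>UNIV. inc_mult (inc_mult (P x) (P x')) (?e x'))"
      unfolding \<beta>_def inc_mult_sum_right inc_mult_assoc ..
    also have "\<dots> = (\<Sum>x'\<in>UNIV. if x' = x then inc_mult (P x) (?e x') else 0)"
      by (rule sum.cong) (auto simp: idem orth)
    finally show ?thesis by simp
  qed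
  have \<beta>_e: "inc_mult \<beta> (?e x) = inc_mult (P x) (?e x)" for x
  proof -
    have "inc_mult \<beta> (?e x) = (\<Sum>x'\<in>UNIV. inc_mult (P x') (inc_mult (?e x') (?e x)))"
      unfolding \<beta>_def inc_mult_sum_left inc_mult_assoc ..
    also have "\<dots> = (\<Sum>x'\<in>UNIV. if x' = x then inc_mult (P x') (?e x') else 0)"
      using bij_is_inj[OF lam(1)] by (intro sum.cong) (auto simp: inc_mult_inc_e_inc_e dest: injD)
    finally show ?thesis by simp
  qed
  have "inc_mult \<gamma> \<beta> = (\<Sum>x\<in>UNIV. inc_mult (inc_mult (?e x) (P x)) (?e x))"
    unfolding \<gamma>_def inc_mult_sum_left inc_mult_assoc P_\<beta> ..
  also have "\<dots> = (\<Sum>x\<in>UNIV. ?e x)"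
    by (simp add: inc_e_sandwich lam(2) inc_smult_def)
  also have "\<dots> = (\<Sum>y\<in>UNIV. inc_e y y)"
    by (rule sum.reindex_bij_betw[OF lam(1)])
  finally have "inc_mult \<gamma> \<beta> = inc_one" by (simp add: sum_inc_e_eq_inc_one)
  moreover have "\<beta> \<in> incidence_algebra" "\<gamma> \<in> incidence_algebra"
    unfolding \<beta>_def \<gamma>_def by (auto intro: sum_in_incidence_algebra inc_mult_in_incidence_algebra)
  ultimately have inv: "inc_invertible \<beta>" and \<gamma>: "inc_inverse \<beta> = \<gamma>"
    and \<beta>\<gamma>: "inc_mult \<beta> \<gamma> = inc_one"
    by (simp_all add: inc_inverse_eq_left_inverse inc_mult_right_inverse_if_left_inverse)
  have "P x = inc_mult (inc_mult \<beta> (?e x)) (inc_inverse \<beta>)" for x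
  proof -
    have "P x = inc_mult (P x) (inc_mult \<beta> \<gamma>)"
      by (simp add: \<beta>\<gamma> inc_mult_one_right[OF PI])
    also have "\<dots> = inc_mult (inc_mult \<beta> (?e x)) (inc_inverse \<beta>)"
      by (simp add: inc_mult_assoc[symmetric] P_\<beta> \<beta>_e \<gamma>)
    finally show ?thesis .
  qed
  with inv show thesis by (rule that)
qed

theorem lemma4p1:
  fixes \<phi> :: "('a::{order,finite} \<Rightarrow> 'a \<Rightarrow> 'b::field) \<Rightarrow> ('a \<Rightarrow> 'a \<Rightarrow> 'b)"
  assumes "connected_poset TYPE('a)"
    and "jordan_automorphism \<phi>"
  shows "\<exists>\<beta> lam. inc_invertible \<beta> \<and> bij lam \<and>
           (\<forall>x. \<phi> (inc_e x x) = inc_mult (inc_mult \<beta> (inc_e (lam x) (lam x))) (inc_inverse \<beta>))"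
proof -
  note \<phi> = assms(2)
  define P where "P x = \<phi> (inc_e x x)" for x
  have PI: "P x \<in> incidence_algebra" for x
    unfolding P_def by (rule jordan_automorphism_in_incidence_algebra[OF \<phi> inc_e_in_incidence_algebra])
  have idem: "inc_mult (P x) (P x) = P x" for x
    unfolding P_def using jordan_automorphism_square[OF \<phi> inc_e_in_incidence_algebra, of x]
    by (simp add: inc_mult_inc_e_inc_e)
  have orth: "inc_mult (P x) (P y) = 0" if "x \<noteq> y" for x y
    unfolding P_def
    by (rule jordan_automorphism_orthogonal[OF \<phi> inc_e_in_incidence_algebra inc_e_in_incidence_algebra])
      (simp_all add: inc_mult_inc_e_inc_e that not_sym[OF that])
  have nz: "P x \<noteq> 0" for x
    unfolding P_def
    by (rule jordan_automorphism_neq_zero[OF \<phi> inc_e_in_incidence_algebra inc_e_neq_zero])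
  obtain lam where lam: "bij lam" "\<And>x. P x (lam x) (lam x) = 1"
    using orthogonal_idempotents_diag_bij[of P, OF PI idem orth nz] by blast
  obtain \<beta> where "inc_invertible \<beta>"
    and "\<And>x. P x = inc_mult (inc_mult \<beta> (inc_e (lam x) (lam x))) (inc_inverse \<beta>)"
    using orthogonal_idempotents_conjugate[of P, OF PI idem orth lam] by blast
  with lam(1) show ?thesis unfolding P_def by blast
qed

end
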